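(* Let $c\in\mathbb{R}$, $g\in\mathbb{R}^d$, let $\mathbf{H}\in\mathbb{R}^{d\times d}$ be symmetric, let $w^t\in\mathbb{R}^d$, and define $$q(w)=c+\langle g,w-w^t\rangle+\tfrac12\langle\mathbf{H}(w-w^t),w-w^t\rangle .$$ Assume $q$ has at least one root and let $w_q^*$ be a root of $q$ of least Euclidean norm, i.e. $w_q^*\in\arg\min\{\|w\|^2: q(w)=0\}$. Define the Newton–Raphson iterates $w^0=w^t$ and $$w^{i+1}=w^i-\frac{q(w^i)}{\|\nabla q(w^i)\|^2}\nabla q(w^i),\qquad i\ge0,$$ assuming $\nabla q(w^i)\neq0$ for all $i$. If $g\in\operatorname{Range}(\mathbf{H})$ and $w^0\in\operatorname{Range}(\mathbf{H})$, then $w^i\in\operatorname{Range}(\mathbf{H})$ and $\nabla q(w^i)\in\operatorname{Range}(\mathbf{H})$ for all $i$, and $w_q^*\in\operatorname{Range}(\mathbf{H})$.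
   Context: In the paper $c=f_i(w^t)$, $g=\nabla f_i(w^t)$, $\mathbf{H}=\nabla^2 f_i(w^t)$ for a twice differentiable loss $f_i$; the statement holds for arbitrary such data. *)

theory Defs
  imports "HOL-Analysis.Analysis"
begin

definition qmodel :: "real \<Rightarrow> real^'d \<Rightarrow> real^'d^'d \<Rightarrow> real^'d \<Rightarrow> real^'d \<Rightarrow> real" where
  "qmodel c g H wt w = c + g \<bullet> (w - wt) + (1/2) * ((H *v (w - wt)) \<bullet> (w - wt))"

text \<open>Gradient of q at w (for symmetric H): g + H (w - wt).\<close>
definition qgrad :: "real^'d \<Rightarrow> real^'d^'d \<Rightarrow> real^'d \<Rightarrow> real^'d \<Rightarrow> real^'d" where
  "qgrad g H wt w = g + H *v (w - wt)"

definition mat_range :: "real^'d^'d \<Rightarrow> (real^'d) set" where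
  "mat_range H = range (\<lambda>x. H *v x)"

end

theory Submission
  imports Defs
begin

text \<open>The gradient is g plus an element of Range(H), so every Newton step moves inside
  Range(H). For the minimum-norm root, split it as p + n with p in Range(H) and n orthogonal
  to Range(H). Since H is symmetric, n lies in its kernel, and g is orthogonal to n, so q does
  not see n: q(p) = q(p + n) = 0. Then p is a root whose squared norm is smaller by
  \<open>\<parallel>n\<parallel>\<^sup>2\<close>, which forces n = 0.\<close>

lemma mat_range_subspace: "subspace (mat_range H)"
  unfolding mat_range_def
  by (rule linear_subspace_image[OF matrix_vector_mul_linear subspace_UNIV])

lemma matrix_vector_mult_in_mat_range: "H *v x \<in> mat_range H"
  unfolding mat_range_def by blast

lemma qgrad_in_mat_range:
  assumes "g \<in> mat_range H"
  shows "qgrad g H wt v \<in> mat_range H"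
  unfolding qgrad_def
  using mat_range_subspace assms matrix_vector_mult_in_mat_range by (rule subspace_add)

lemma iterates_in_subspace:
  assumes "subspace S" and "w 0 \<in> S" and "\<And>i. d i \<in> S"
    and "\<And>i. w (Suc i) = w i - a i *\<^sub>R d i"
  shows "w i \<in> S"
proof (induction i)
  case 0
  show ?case using assms(2) .
next
  case (Suc i)
  then show ?case using assms(1,3,4) by (metis subspace_diff subspace_scale)
qed

lemma symmetric_matrix_kills_orthogonal_of_range:
  fixes H :: "real^'d^'d"
  assumes "transpose H = H" and "\<And>v. v \<in> mat_range H \<Longrightarrow> n \<bullet> v = 0"
  shows "H *v n = 0"
proof -
  have "(H *v n) \<bullet> (H *v n) = n \<bullet> (H *v (H *v n))"
    by (metis assms(1) dot_lmul_matrix vector_transpose_matrix)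
  also have "\<dots> = 0"
    using assms(2) matrix_vector_mult_in_mat_range by blast
  finally show ?thesis by simp
qed

lemma qmodel_add_orthogonal_of_range:
  assumes "transpose H = H" and "g \<in> mat_range H"
    and n_orth: "\<And>v. v \<in> mat_range H \<Longrightarrow> n \<bullet> v = 0"
  shows "qmodel c g H wt (p + n) = qmodel c g H wt p"
proof -
  have "H *v (p + n - wt) = H *v (p - wt)"
    using symmetric_matrix_kills_orthogonal_of_range[OF assms(1) n_orth]
    by (simp add: matrix_vector_mult_diff_distrib matrix_vector_right_distrib)
  moreover have "g \<bullet> n = 0"
    using n_orth[OF assms(2)] by (simp add: inner_commute)
  moreover have "(H *v (p - wt)) \<bullet> n = 0"
    using n_orth[OF matrix_vector_mult_in_mat_range] by (simp add: inner_commute)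
  ultimately show ?thesis
    unfolding qmodel_def
    by (simp add: inner_diff_right inner_add_right inner_diff_left inner_add_left)
qed

lemma min_norm_root_in_mat_range:
  assumes "transpose H = H" and "g \<in> mat_range H"
    and root: "qmodel c g H wt wq = 0"
    and minnorm: "\<And>v. qmodel c g H wt v = 0 \<Longrightarrow> (norm wq)\<^sup>2 \<le> (norm v)\<^sup>2"
  shows "wq \<in> mat_range H"
proof -
  have span_range: "span (mat_range H) = mat_range H"
    using mat_range_subspace by (simp add: span_eq_iff)
  obtain p n where p: "p \<in> mat_range H" and wq: "wq = p + n"
    and n_orth: "\<And>v. v \<in> mat_range H \<Longrightarrow> n \<bullet> v = 0"
    using orthogonal_subspace_decomp_exists[of "mat_range H" wq]
    unfolding span_range orthogonal_def by blast
  have "qmodel c g H wt p = 0"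
    using qmodel_add_orthogonal_of_range[OF assms(1,2) n_orth] root wq by simp
  then have "(norm wq)\<^sup>2 \<le> (norm p)\<^sup>2" by (rule minnorm)
  moreover have "(norm wq)\<^sup>2 = (norm p)\<^sup>2 + (norm n)\<^sup>2"
    using wq n_orth[OF p]
    by (simp add: power2_norm_eq_inner inner_add_left inner_add_right inner_commute)
  ultimately have "n = 0" by simp
  with p wq show ?thesis by simp
qed

theorem lemma6:
  fixes c :: real and g wt wq :: "real^'d" and H :: "real^'d^'d" and w :: "nat \<Rightarrow> real^'d"
  assumes symH: "transpose H = H"
    and root: "qmodel c g H wt wq = 0"
    and minnorm: "\<forall>v. qmodel c g H wt v = 0 \<longrightarrow> (norm wq)\<^sup>2 \<le> (norm v)\<^sup>2"
    and w0: "w 0 = wt"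
    and wSuc: "\<forall>i. w (Suc i) = w i - (qmodel c g H wt (w i) / (norm (qgrad g H wt (w i)))\<^sup>2)
                                       *\<^sub>R qgrad g H wt (w i)"
    and gradnz: "\<forall>i. qgrad g H wt (w i) \<noteq> 0"
    and g_range: "g \<in> mat_range H"
    and w0_range: "w 0 \<in> mat_range H"
  shows "(\<forall>i. w i \<in> mat_range H \<and> qgrad g H wt (w i) \<in> mat_range H) \<and> wq \<in> mat_range H"
proof -
  have "w i \<in> mat_range H" for i
    by (rule iterates_in_subspace[where d = "\<lambda>i. qgrad g H wt (w i)"])
      (use mat_range_subspace w0_range qgrad_in_mat_range[OF g_range] wSuc in auto)
  moreover have "wq \<in> mat_range H"
    using symH g_range root minnorm by (blast intro: min_norm_root_in_mat_range)
  ultimately show ?thesis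
    using qgrad_in_mat_range[OF g_range] by blast
qed

end
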